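(* For every integer $n\ge 1$, $R_n(x)=L_{2n,n}(x)$.
   Context: An even tree is a rooted plane (ordered) tree in which every vertex has an even number of children. If a vertex has $2k$ children, its first $k$ children (in the plane order) are called left children and its last $k$ children are called right children. The degree of a vertex means its number of children. The $r$-index $r(T)$ of an even tree $T$ is half of the sum of the degrees of all vertices of $T$ that are right children. Let $R_{n,k}$ be the number of even trees with $2n$ edges and $r$-index $k$, and $R_n(x)=\sum_{k=0}^{n-1}R_{n,k}x^k$. Lattice polynomials: for integers $i,j\ge 0$, consider lattice paths from $(0,0)$ to $(i,j)$ consisting of unit east steps $(1,0)$ and unit north steps $(0,1)$ such that no step goes above the line $x=2y$ (every lattice point $(a,b)$ visited satisfies $a\ge 2b$). A north step from $(k,\ell)$ to $(k,\ell+1)$ receives weight $x$ if $k$ is odd; all other steps receive weight $1$. The weight of a path is the product of its step weights, and $L_{i,j}(x)$ is the sum of the weights of all such paths. *)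

theory Defs
  imports "HOL-Computational_Algebra.Polynomial"
begin

datatype ptree = Node "ptree list"

fun children :: "ptree \<Rightarrow> ptree list" where
  "children (Node ts) = ts"

definition degree_pt :: "ptree \<Rightarrow> nat" where
  "degree_pt t = length (children t)"

fun num_nodes :: "ptree \<Rightarrow> nat" where
  "num_nodes (Node ts) = 1 + sum_list (map num_nodes ts)"

definition num_edges :: "ptree \<Rightarrow> nat" where
  "num_edges t = num_nodes t - 1"

fun even_tree :: "ptree \<Rightarrow> bool" where
  "even_tree (Node ts) = (even (length ts) \<and> (\<forall>t\<in>set ts. even_tree t))"

text \<open>Sum of the degrees of all vertices of the tree that are right children
  (the root is nobody's child). A vertex with \<open>2k\<close> children has its last \<open>k\<close>
  children as right children.\<close>
fun right_deg_sum :: "ptree \<Rightarrow> nat" where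
  "right_deg_sum (Node ts) =
     sum_list (map right_deg_sum ts)
     + sum_list (map degree_pt (drop (length ts div 2) ts))"

definition r_index :: "ptree \<Rightarrow> nat" where
  "r_index t = right_deg_sum t div 2"

definition R_count :: "nat \<Rightarrow> nat \<Rightarrow> nat" where
  "R_count n k = card {t. even_tree t \<and> num_edges t = 2 * n \<and> r_index t = k}"

definition R_poly :: "nat \<Rightarrow> int poly" where
  "R_poly n = (\<Sum>k<n. monom (int (R_count n k)) k)"

text \<open>Lattice paths: a list of steps, True = north step (0,1), False = east step (1,0).\<close>
fun visited :: "nat \<times> nat \<Rightarrow> bool list \<Rightarrow> (nat \<times> nat) list" where
  "visited p [] = [p]"
| "visited (a, b) (s # ss) =
     (a, b) # visited (if s then (a, Suc b) else (Suc a, b)) ss"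

fun odd_north :: "nat \<times> nat \<Rightarrow> bool list \<Rightarrow> nat" where
  "odd_north p [] = 0"
| "odd_north (a, b) (s # ss) =
     (if s \<and> odd a then 1 else 0)
     + odd_north (if s then (a, Suc b) else (Suc a, b)) ss"

definition lattice_paths :: "nat \<Rightarrow> nat \<Rightarrow> bool list set" where
  "lattice_paths i j = {ss. count_list ss False = i \<and> count_list ss True = j \<and>
      (\<forall>(a, b) \<in> set (visited (0, 0) ss). 2 * b \<le> a)}"

definition L_poly :: "nat \<Rightarrow> nat \<Rightarrow> int poly" where
  "L_poly i j = (\<Sum>ss\<in>lattice_paths i j. monom 1 (odd_north (0, 0) ss))"

end

theory Submission
  imports Defs "HOL-Computational_Algebra.Formal_Power_Series"
begin

text \<open>Both sides are the \<open>n\<close>-th coefficient of a power series over \<open>\<int>[x]\<close>.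
  Cutting an even tree with at least one edge at its first child \<open>l\<close> and at its first right
  child \<open>r\<close> leaves an even tree \<open>u\<close>, and the \<open>r\<close>-index is additive except that \<open>r\<close>
  contributes its \<open>r\<close>-index as a right child. Hence the series \<open>A\<close> of even trees by
  \<open>r\<close>-index and the series \<open>B\<close> of even trees by \<open>r\<close>-index as a right child satisfy
  \<open>A = 1 + X A B A\<close> and \<open>B = 1 + X A B x B\<close>.
  On the lattice side let \<open>F\<^sub>e\<close> count paths ending on the line \<open>x = 2y\<close> and \<open>G\<^sub>e\<close> paths
  ending one unit to the right of it, where \<open>e \<in> {0, 1}\<close> is the parity of the starting
  abscissa, \<open>e' = 1 - e\<close>, and let \<open>c\<^sub>0 = 1\<close>, \<open>c\<^sub>1 = x\<close>. Splitting off the first east step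
  and the first north step returning below that level gives \<open>F\<^sub>e = 1 + X G\<^sub>e\<^sub>' c\<^sub>e F\<^sub>e\<close> and
  \<open>G\<^sub>e = F\<^sub>e\<^sub>' + X G\<^sub>e\<^sub>' c\<^sub>e G\<^sub>e\<close>, whence \<open>G\<^sub>e = F\<^sub>e F\<^sub>e\<^sub>'\<close>, so \<open>(F\<^sub>0, F\<^sub>1)\<close> solves
  the same system as \<open>(A, B)\<close>. That system determines its solution coefficient by
  coefficient.\<close>

lemma length_eq_count_True_False: "length ss = count_list ss True + count_list ss False"
  by (induction ss) auto

lemma dvd_sum_list_map:
  fixes f :: "'a \<Rightarrow> 'b::comm_semiring_1"
  shows "(\<And>x. x \<in> set xs \<Longrightarrow> d dvd f x) \<Longrightarrow> d dvd sum_list (map f xs)"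
  by (induction xs) auto

lemma sum_list_map_take_drop:
  "sum_list (map f (take k xs)) + sum_list (map f (drop k xs)) = sum_list (map f xs)"
  by (metis append_take_drop_id map_append sum_list_append)

lemma even_list_split:
  assumes "even (length ts)" "ts \<noteq> []"
  obtains l r L R where "ts = l # L @ r # R" "length L = length R"
proof -
  obtain l xs where ts: "ts = l # xs"
    using assms(2) by (cases ts) auto
  then obtain k where k: "length xs = 2 * k + 1"
    using assms(1) by (auto elim: oddE)
  then obtain r R where rR: "drop k xs = r # R"
    by (cases "drop k xs") auto
  have "xs = take k xs @ r # R"
    using rR by (metis append_take_drop_id)
  moreover have "length (drop k xs) = k + 1"
    using k by simp
  then have "length R = k"
    using rR by simp
  ultimately show thesis
    using that[of l "take k xs" r R] ts k by simp
qed

lemma sum_Times_mult: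
  assumes "\<And>a b. a \<in> A \<Longrightarrow> b \<in> B \<Longrightarrow> F (a, b) = f a * g b"
  shows "(\<Sum>p\<in>A \<times> B. F p) = sum f A * (sum g B :: 'a::comm_semiring_0)"
proof -
  have "(\<Sum>p\<in>A \<times> B. F p) = (\<Sum>(a, b)\<in>A \<times> B. f a * g b)"
    by (rule sum.cong) (auto simp: assms)
  then show ?thesis
    by (simp add: sum.cartesian_product sum_product)
qed

lemma linear_solution_scale:
  fixes F G a b :: "'a::comm_ring_1"
  assumes "F = 1 + a * F" "G = b + a * G"
  shows "G = F * b"
proof -
  have "(1 - a) * F = 1" "(1 - a) * G = b"
    using assms by (simp_all add: algebra_simps)
  then show ?thesis
    by (metis mult.assoc mult.commute mult_1)
qed

lemma fps_cutoff_mult_cong: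
  fixes f g f' g' :: "'a::comm_semiring_0 fps"
  assumes "fps_cutoff n f = fps_cutoff n f'" "fps_cutoff n g = fps_cutoff n g'"
  shows "fps_cutoff n (f * g) = fps_cutoff n (f' * g')"
proof -
  have "fps_nth (f * g) k = fps_nth (f' * g') k" if "k < n" for k
  proof -
    have "fps_nth (f * g) k = fps_nth (fps_cutoff n f * fps_cutoff n g) k"
      using that by (simp add: fps_cutoff_left_mult_nth fps_cutoff_right_mult_nth)
    also have "\<dots> = fps_nth (f' * g') k"
      using that by (simp add: assms fps_cutoff_left_mult_nth fps_cutoff_right_mult_nth)
    finally show ?thesis .
  qed
  then show ?thesis
    by (simp add: fps_cutoff_eq_fps_cutoff_iff)
qed

lemma fps_system_unique:
  fixes A B A' B' c :: "'a::comm_ring_1 fps"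
  assumes A: "A = 1 + fps_X * (A * (B * A))" and B: "B = 1 + fps_X * (A * (B * (c * B)))"
    and A': "A' = 1 + fps_X * (A' * (B' * A'))" and B': "B' = 1 + fps_X * (A' * (B' * (c * B')))"
  shows "A = A'" "B = B'"
proof -
  have nth: "fps_nth F k = (if k = 0 then 1 else fps_nth G (k - 1))"
    if "F = 1 + fps_X * G" for F G :: "'a fps" and k
    using that by simp
  have "fps_cutoff n A = fps_cutoff n A' \<and> fps_cutoff n B = fps_cutoff n B'" for n
  proof (induction n)
    case (Suc n)
    then have "fps_cutoff n (A * (B * A)) = fps_cutoff n (A' * (B' * A'))"
      "fps_cutoff n (A * (B * (c * B))) = fps_cutoff n (A' * (B' * (c * B')))"
      by (blast intro: fps_cutoff_mult_cong)+
    then have "\<forall>k<Suc n. fps_nth A k = fps_nth A' k \<and> fps_nth B k = fps_nth B' k"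
      unfolding fps_cutoff_eq_fps_cutoff_iff nth[OF A] nth[OF B] nth[OF A'] nth[OF B'] by auto
    then show ?case
      by (simp add: fps_cutoff_eq_fps_cutoff_iff)
  qed simp
  then have "fps_nth A k = fps_nth A' k \<and> fps_nth B k = fps_nth B' k" for k
    by (metis fps_cutoff_eq_fps_cutoff_iff lessI)
  then show "A = A'" "B = B'"
    by (auto intro: fps_ext)
qed

section \<open>Lattice paths\<close>

text \<open>The height of
  \<open>(a, b)\<close> is \<open>a - 2b\<close>, so the constraint \<open>a \<ge> 2b\<close> says the height never becomes negative.
  The flag \<open>e\<close> of \<open>odd_weight\<close> is the parity of the current abscissa.\<close>

fun nonneg_path :: "int \<Rightarrow> bool list \<Rightarrow> bool" where
  "nonneg_path h [] = (0 \<le> h)"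
| "nonneg_path h (s # ss) = (0 \<le> h \<and> nonneg_path (if s then h - 2 else h + 1) ss)"

fun odd_weight :: "bool \<Rightarrow> bool list \<Rightarrow> nat" where
  "odd_weight e [] = 0"
| "odd_weight e (s # ss) =
     (if s then (if e then 1 else 0) + odd_weight e ss else odd_weight (\<not> e) ss)"

definition height_change :: "bool list \<Rightarrow> int" where
  "height_change ss = int (count_list ss False) - 2 * int (count_list ss True)"

lemma height_change_simps [simp]:
  "height_change [] = 0"
  "height_change (True # ss) = height_change ss - 2"
  "height_change (False # ss) = height_change ss + 1"
  "height_change (v @ w) = height_change v + height_change w"
  by (auto simp: height_change_def)

lemma nonneg_path_start: "nonneg_path h ss \<Longrightarrow> 0 \<le> h"
  by (cases ss) auto

lemma nonneg_path_append:
  "nonneg_path h (v @ w) \<longleftrightarrow> nonneg_path h v \<and> nonneg_path (h + height_change v) w"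
  by (induction v arbitrary: h) (auto simp: algebra_simps dest: nonneg_path_start)

lemma nonneg_path_mono: "nonneg_path h ss \<Longrightarrow> h \<le> h' \<Longrightarrow> nonneg_path h' ss"
proof (induction ss arbitrary: h h')
  case (Cons s ss)
  then show ?case
    by (cases s) (auto intro: Cons.IH[of "h - 2"] Cons.IH[of "h + 1"])
qed simp

lemma nonneg_path_end: "nonneg_path h ss \<Longrightarrow> 0 \<le> h + height_change ss"
  using nonneg_path_append[of h ss "[]"] by simp

lemma odd_weight_append:
  "odd_weight e (v @ w) = odd_weight e v + odd_weight (if even (count_list v False) then e else \<not> e) w"
  by (induction v arbitrary: e) auto

lemma nonneg_path_first_drop:
  assumes "0 \<le> h" "nonneg_path (h + 1) r" "\<not> nonneg_path h r"
  shows "\<exists>v w. r = v @ True # w \<and> nonneg_path h v \<and> h + height_change v = 1 \<and> nonneg_path 0 w"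
  using assms
proof (induction r arbitrary: h)
  case Nil
  then show ?case by simp
next
  case (Cons s r)
  show ?case
  proof (cases s)
    case False
    with Cons.prems have "nonneg_path (h + 1 + 1) r" "\<not> nonneg_path (h + 1) r"
      by (simp_all add: algebra_simps)
    then obtain v w where "r = v @ True # w" "nonneg_path (h + 1) v" "h + 1 + height_change v = 1"
        "nonneg_path 0 w"
      using Cons.IH[of "h + 1"] Cons.prems(1) by auto
    then show ?thesis
      using False Cons.prems(1) by (intro exI[of _ "False # v"] exI[of _ w]) (simp add: algebra_simps)
  next
    case True
    with Cons.prems have r: "nonneg_path (h - 1) r" "\<not> nonneg_path (h - 2) r"
      by (simp_all add: algebra_simps)
    consider "h = 0" | "h = 1" | "h \<ge> 2"
      using Cons.prems(1) by linarith
    then show ?thesis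
    proof cases
      case 1
      then show ?thesis using r(1) nonneg_path_start by fastforce
    next
      case 2
      then show ?thesis using r(1) True by (intro exI[of _ "[]"] exI[of _ r]) simp
    next
      case 3
      then obtain v w where "r = v @ True # w" "nonneg_path (h - 2) v" "h - 2 + height_change v = 1"
          "nonneg_path 0 w"
        using Cons.IH[of "h - 2"] r by (auto simp: algebra_simps)
      then show ?thesis
        using True 3 by (intro exI[of _ "True # v"] exI[of _ w]) (simp add: algebra_simps)
    qed
  qed
qed

lemma not_nonneg_path_drop_below: "height_change v = 1 \<Longrightarrow> \<not> nonneg_path 0 (v @ True # w)"
  by (auto simp: nonneg_path_append dest: nonneg_path_start)

lemma nonneg_path_first_drop_unique:
  assumes "v @ True # w = v' @ True # w'"
    and "nonneg_path 0 v" "height_change v = 1" "nonneg_path 0 v'" "height_change v' = 1"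
  shows "v = v' \<and> w = w'"
proof -
  from assms(1) obtain us where
    "v = v' @ us \<and> us @ True # w = True # w' \<or> v @ us = v' \<and> True # w = us @ True # w'"
    by (auto simp: append_eq_append_conv2)
  then show ?thesis
  proof
    assume "v = v' @ us \<and> us @ True # w = True # w'"
    then show ?thesis
      using not_nonneg_path_drop_below[of v' "tl us"] assms(2,5) by (cases us) auto
  next
    assume "v @ us = v' \<and> True # w = us @ True # w'"
    then show ?thesis
      using not_nonneg_path_drop_below[of v "tl us"] assms(3,4) by (cases us) auto
  qed
qed

definition nonneg_paths :: "int \<Rightarrow> nat \<Rightarrow> bool list set" where
  "nonneg_paths h n = {ss. count_list ss True = n \<and> height_change ss = h \<and> nonneg_path 0 ss}"

lemma finite_nonneg_paths: "finite (nonneg_paths h n)"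
proof (rule finite_subset)
  show "nonneg_paths h n \<subseteq> {ss. set ss \<subseteq> UNIV \<and> length ss \<le> 3 * n + nat h}"
    by (auto simp: nonneg_paths_def height_change_def length_eq_count_True_False)
qed (use finite_lists_length_le[of "UNIV :: bool set"] in simp)

lemma nonneg_paths_disjoint: "m \<noteq> m' \<Longrightarrow> nonneg_paths h m \<inter> nonneg_paths h m' = {}"
  by (auto simp: nonneg_paths_def)

lemma nonneg_paths_0_0: "nonneg_paths 0 0 = {[]}"
proof -
  have "ss = []" if "ss \<in> nonneg_paths 0 0" for ss
    using that length_eq_count_True_False[of ss] by (auto simp: nonneg_paths_def height_change_def)
  then show ?thesis by (auto simp: nonneg_paths_def)
qed

lemma nonneg_paths_negative: "h < 0 \<Longrightarrow> nonneg_paths h n = {}"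
  by (auto simp: nonneg_paths_def dest: nonneg_path_end)

lemma count_False_nonneg_paths:
  "ss \<in> nonneg_paths h n \<Longrightarrow> int (count_list ss False) = h + 2 * int n"
  by (auto simp: nonneg_paths_def height_change_def)

text \<open>First-return decomposition: in \<open>glue v w\<close> the displayed north step is the first step
  that brings the path below height \<open>1\<close>.\<close>

definition glue :: "bool list \<Rightarrow> bool list \<Rightarrow> bool list" where
  "glue v w = False # v @ True # w"

lemma inj_on_glue: "inj_on (case_prod glue) {(v, w). nonneg_path 0 v \<and> height_change v = 1}"
  by (rule inj_onI) (auto simp: glue_def dest: nonneg_path_first_drop_unique)

lemma glue_in_nonneg_paths:
  "v \<in> nonneg_paths 1 m \<Longrightarrow> w \<in> nonneg_paths h k \<Longrightarrow> glue v w \<in> nonneg_paths h (m + k + 1)"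
  by (auto simp: nonneg_paths_def glue_def nonneg_path_append intro: nonneg_path_mono)

lemma nonneg_paths_cases:
  assumes "ss \<in> nonneg_paths h n" "ss \<noteq> []"
  obtains r where "ss = False # r" "r \<in> nonneg_paths (h - 1) n"
  | m v w where "m < n" "v \<in> nonneg_paths 1 m" "w \<in> nonneg_paths h (n - 1 - m)" "ss = glue v w"
proof -
  obtain s r where ss: "ss = s # r"
    using assms(2) by (cases ss) auto
  have "\<not> s"
    using assms(1) ss by (cases s) (auto simp: nonneg_paths_def dest: nonneg_path_start)
  with assms(1) ss have r: "nonneg_path (0 + 1) r" "count_list r True = n" "height_change r = h - 1"
    by (auto simp: nonneg_paths_def)
  show thesis
  proof (cases "nonneg_path 0 r")
    case True
    with r ss \<open>\<not> s\<close> show thesis by (intro that(1)) (auto simp: nonneg_paths_def)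
  next
    case False
    with r obtain v w where vw: "r = v @ True # w" "nonneg_path 0 v" "height_change v = 1"
        "nonneg_path 0 w"
      using nonneg_path_first_drop[of 0 r] by auto
    define m where "m = count_list v True"
    have "v \<in> nonneg_paths 1 m" "w \<in> nonneg_paths h (n - 1 - m)" "m < n"
      using vw r by (auto simp: nonneg_paths_def m_def)
    with ss vw \<open>\<not> s\<close> show thesis by (intro that(2)) (auto simp: glue_def)
  qed
qed

lemma nonneg_paths_decomp:
  assumes "h \<noteq> 0 \<or> n \<noteq> 0"
  shows "nonneg_paths h n = (#) False ` nonneg_paths (h - 1) n
    \<union> case_prod glue ` (\<Union>m<n. nonneg_paths 1 m \<times> nonneg_paths h (n - 1 - m))"
proof (intro equalityI subsetI)
  fix ss assume ss: "ss \<in> nonneg_paths h n"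
  have "ss \<noteq> []"
    using ss assms by (auto simp: nonneg_paths_def)
  with ss show "ss \<in> (#) False ` nonneg_paths (h - 1) n
      \<union> case_prod glue ` (\<Union>m<n. nonneg_paths 1 m \<times> nonneg_paths h (n - 1 - m))"
    by (cases rule: nonneg_paths_cases) auto
next
  fix ss assume "ss \<in> (#) False ` nonneg_paths (h - 1) n
      \<union> case_prod glue ` (\<Union>m<n. nonneg_paths 1 m \<times> nonneg_paths h (n - 1 - m))"
  then consider r where "ss = False # r" "r \<in> nonneg_paths (h - 1) n"
    | m v w where "m < n" "v \<in> nonneg_paths 1 m" "w \<in> nonneg_paths h (n - 1 - m)" "ss = glue v w"
    by auto
  then show "ss \<in> nonneg_paths h n"
  proof cases
    case 1
    then show ?thesis by (auto simp: nonneg_paths_def intro: nonneg_path_mono)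
  next
    case 2
    then show ?thesis using glue_in_nonneg_paths[of v m w h "n - 1 - m"] by simp
  qed
qed

definition north_step_weight :: "bool \<Rightarrow> int poly" where
  "north_step_weight e = monom 1 (if e then 1 else 0)"

definition path_poly :: "int \<Rightarrow> bool \<Rightarrow> nat \<Rightarrow> int poly" where
  "path_poly h e n = (\<Sum>ss\<in>nonneg_paths h n. monom 1 (odd_weight e ss))"

lemma path_poly_0_0: "path_poly 0 e 0 = 1"
  by (simp add: path_poly_def nonneg_paths_0_0)

lemma path_poly_negative: "h < 0 \<Longrightarrow> path_poly h e n = 0"
  by (simp add: path_poly_def nonneg_paths_negative)

lemma odd_weight_glue:
  assumes "v \<in> nonneg_paths 1 m"
  shows "monom 1 (odd_weight e (glue v w))
    = monom 1 (odd_weight (\<not> e) v) * (north_step_weight e * monom 1 (odd_weight e w))"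
proof -
  have "odd (count_list v False)"
    using count_False_nonneg_paths[OF assms] by presburger
  then show ?thesis
    by (simp add: glue_def odd_weight_append north_step_weight_def mult_monom add_ac)
qed

lemma path_poly_glue_sum:
  "(\<Sum>p\<in>nonneg_paths 1 m \<times> B. monom 1 (odd_weight e (case_prod glue p)))
    = path_poly 1 (\<not> e) m * (north_step_weight e * (\<Sum>w\<in>B. monom 1 (odd_weight e w)))"
proof -
  have "(\<Sum>p\<in>nonneg_paths 1 m \<times> B. monom 1 (odd_weight e (case_prod glue p)))
      = (\<Sum>v\<in>nonneg_paths 1 m. \<Sum>w\<in>B.
          monom 1 (odd_weight (\<not> e) v) * (north_step_weight e * monom 1 (odd_weight e w)))"
    unfolding sum.cartesian_product by (intro sum.cong refl) (auto simp: odd_weight_glue)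
  also have "\<dots> = path_poly 1 (\<not> e) m * (\<Sum>w\<in>B. north_step_weight e * monom 1 (odd_weight e w))"
    unfolding path_poly_def by (rule sum_product[symmetric])
  finally show ?thesis
    by (simp add: sum_distrib_left)
qed

lemma path_poly_rec:
  assumes "h \<noteq> 0 \<or> n \<noteq> 0"
  shows "path_poly h e n = path_poly (h - 1) (\<not> e) n
    + (\<Sum>m<n. path_poly 1 (\<not> e) m * (north_step_weight e * path_poly h e (n - 1 - m)))"
proof -
  let ?U = "\<Union>m<n. nonneg_paths 1 m \<times> nonneg_paths h (n - 1 - m)"
  let ?w = "\<lambda>ss. monom 1 (odd_weight e ss) :: int poly"
  have inj: "inj_on (case_prod glue) ?U"
    by (rule inj_on_subset[OF inj_on_glue]) (auto simp: nonneg_paths_def)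
  have disj: "(#) False ` nonneg_paths (h - 1) n \<inter> case_prod glue ` ?U = {}"
    using not_nonneg_path_drop_below by (fastforce simp: glue_def nonneg_paths_def)
  have "path_poly h e n = sum ?w ((#) False ` nonneg_paths (h - 1) n) + sum ?w (case_prod glue ` ?U)"
    unfolding path_poly_def nonneg_paths_decomp[OF assms]
    by (rule sum.union_disjoint[OF _ _ disj]) (simp_all add: finite_nonneg_paths)
  also have "sum ?w ((#) False ` nonneg_paths (h - 1) n) = path_poly (h - 1) (\<not> e) n"
    by (simp add: sum.reindex path_poly_def)
  also have "sum ?w (case_prod glue ` ?U) = (\<Sum>p\<in>?U. ?w (case_prod glue p))"
    by (rule sum.reindex[OF inj, unfolded comp_def])
  also have "\<dots> = (\<Sum>m<n. \<Sum>p\<in>nonneg_paths 1 m \<times> nonneg_paths h (n - 1 - m). ?w (case_prod glue p))"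
    by (rule sum.UNION_disjoint) (use nonneg_paths_disjoint in \<open>auto simp: finite_nonneg_paths\<close>)
  also have "\<dots> = (\<Sum>m<n. path_poly 1 (\<not> e) m * (north_step_weight e * path_poly h e (n - 1 - m)))"
    by (simp only: path_poly_glue_sum path_poly_def)
  finally show ?thesis .
qed

definition path_fps :: "int \<Rightarrow> bool \<Rightarrow> int poly fps" where
  "path_fps h e = Abs_fps (path_poly h e)"

lemma path_fps_negative: "h < 0 \<Longrightarrow> path_fps h e = 0"
  by (simp add: fps_ext path_fps_def path_poly_negative)

lemma path_fps_eq:
  "path_fps h e = path_fps (h - 1) (\<not> e) + (if h = 0 then 1 else 0)
    + fps_X * (path_fps 1 (\<not> e) * (fps_const (north_step_weight e) * path_fps h e))"
proof (rule fps_ext)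
  fix n
  show "fps_nth (path_fps h e) n = fps_nth (path_fps (h - 1) (\<not> e) + (if h = 0 then 1 else 0)
    + fps_X * (path_fps 1 (\<not> e) * (fps_const (north_step_weight e) * path_fps h e))) n"
  proof (cases n)
    case 0
    then show ?thesis
      by (cases "h = 0")
        (simp_all add: path_fps_def path_poly_0_0 path_poly_negative path_poly_rec[of h 0])
  next
    case (Suc k)
    have "path_poly h e (Suc k) = path_poly (h - 1) (\<not> e) (Suc k)
      + (\<Sum>i=0..k. path_poly 1 (\<not> e) i * (north_step_weight e * path_poly h e (k - i)))"
      by (subst path_poly_rec) (simp_all add: atLeast0AtMost lessThan_Suc_atMost)
    with Suc show ?thesis
      by (simp add: path_fps_def fps_mult_nth[of "Abs_fps (path_poly 1 (\<not> e))"])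
  qed
qed

lemma path_fps_system:
  defines "A \<equiv> path_fps 0 False" and "B \<equiv> path_fps 0 True"
    and "c \<equiv> fps_const (north_step_weight True)"
  shows "A = 1 + fps_X * (A * (B * A))" "B = 1 + fps_X * (A * (B * (c * B)))"
proof -
  define a where "a e = fps_X * path_fps 1 (\<not> e) * fps_const (north_step_weight e)" for e
  have F: "path_fps 0 e = 1 + a e * path_fps 0 e" for e
    using path_fps_eq[of 0 e] by (simp add: a_def path_fps_negative ac_simps)
  have G: "path_fps 1 e = path_fps 0 (\<not> e) + a e * path_fps 1 e" for e
    using path_fps_eq[of 1 e] by (simp add: a_def ac_simps)
  have "path_fps 1 e = path_fps 0 e * path_fps 0 (\<not> e)" for e
    by (rule linear_solution_scale[OF F G])
  then show "A = 1 + fps_X * (A * (B * A))" "B = 1 + fps_X * (A * (B * (c * B)))"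
    using F[of False] F[of True] unfolding A_def B_def c_def a_def
    by (simp_all add: north_step_weight_def ac_simps)
qed

section \<open>Even trees\<close>

lemma num_edges_Node: "num_edges (Node ts) = length ts + sum_list (map num_edges ts)"
proof -
  have "num_nodes t = Suc (num_edges t)" for t
    by (cases t) (simp add: num_edges_def)
  then have "sum_list (map num_nodes ts) = length ts + sum_list (map num_edges ts)"
    by (induction ts) simp_all
  then show ?thesis
    by (simp add: num_edges_def)
qed

lemma even_tree_even_counts:
  "even_tree t \<Longrightarrow> even (num_edges t) \<and> even (right_deg_sum t) \<and> even (degree_pt t)"
proof (induction t)
  case (Node ts)
  then have "even (length ts)" and IH: "\<And>t. t \<in> set ts \<Longrightarrow>
      even (num_edges t) \<and> even (right_deg_sum t) \<and> even (degree_pt t)"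
    by auto
  have "even (sum_list (map num_edges ts))" "even (sum_list (map right_deg_sum ts))"
    "even (sum_list (map degree_pt (drop (length ts div 2) ts)))"
    using IH by (auto intro!: dvd_sum_list_map dest: in_set_dropD)
  with \<open>even (length ts)\<close> show ?case
    by (simp add: num_edges_Node degree_pt_def)
qed

definition even_trees :: "nat \<Rightarrow> ptree set" where
  "even_trees n = {t. even_tree t \<and> num_edges t = 2 * n}"

text \<open>\<open>graft l r u\<close> makes \<open>l\<close> the first child and \<open>r\<close> the first right child of the root
  of \<open>u\<close>.\<close>

definition graft :: "ptree \<Rightarrow> ptree \<Rightarrow> ptree \<Rightarrow> ptree" where
  "graft l r u = (let ts = children u; k = length ts div 2 in Node (l # take k ts @ r # drop k ts))"

lemma graft_Node: "length L = length R \<Longrightarrow> graft l r (Node (L @ R)) = Node (l # L @ r # R)"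
  by (simp add: graft_def)

lemma even_tree_halves:
  assumes "even_tree u"
  obtains L R where "u = Node (L @ R)" "length L = length R"
proof -
  obtain ts where u: "u = Node ts"
    by (cases u)
  with assms have "length (take (length ts div 2) ts) = length (drop (length ts div 2) ts)"
    by auto
  then show thesis
    using that u by (metis append_take_drop_id)
qed

lemma num_edges_graft: "num_edges (graft l r u) = num_edges l + num_edges r + num_edges u + 2"
proof (cases u)
  case (Node ts)
  then show ?thesis
    by (simp add: graft_def Let_def num_edges_Node sum_list_map_take_drop
        min_absorb2)
qed

lemma even_tree_graft:
  assumes "even_tree l" "even_tree r" "even_tree u"
  shows "even_tree (graft l r u)"
proof -
  obtain L R where "u = Node (L @ R)" "length L = length R"
    using assms(3) by (rule even_tree_halves)
  with assms show ?thesis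
    by (auto simp: graft_Node)
qed

lemma graft_cases:
  assumes "even_tree t" "num_edges t \<noteq> 0"
  obtains l r u where "t = graft l r u" "even_tree l" "even_tree r" "even_tree u"
proof -
  obtain ts where t: "t = Node ts"
    by (cases t)
  with assms have "even (length ts)" "ts \<noteq> []"
    by (auto simp: num_edges_Node)
  then obtain l r L R where ts: "ts = l # L @ r # R" "length L = length R"
    by (rule even_list_split)
  with assms(1) t show thesis
    by (intro that[of l r "Node (L @ R)"]) (auto simp: graft_Node)
qed

lemma graft_inj:
  assumes "even_tree u" "even_tree u'" "graft l r u = graft l' r' u'"
  shows "l = l' \<and> r = r' \<and> u = u'"
proof -
  obtain L R where u: "u = Node (L @ R)" "length L = length R"
    using assms(1) by (rule even_tree_halves)
  obtain L' R' where u': "u' = Node (L' @ R')" "length L' = length R'"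
    using assms(2) by (rule even_tree_halves)
  have eq: "l # L @ r # R = l' # L' @ r' # R'"
    using assms(3) u u' by (simp add: graft_Node)
  moreover have "length L = length L'"
    using arg_cong[OF eq, of length] u(2) u'(2) by simp
  ultimately show ?thesis
    using u u' by auto
qed

lemma right_deg_sum_graft:
  assumes "even_tree u"
  shows "right_deg_sum (graft l r u)
    = right_deg_sum l + (right_deg_sum r + degree_pt r) + right_deg_sum u"
proof -
  obtain L R where "u = Node (L @ R)" "length L = length R"
    using assms by (rule even_tree_halves)
  then show ?thesis
    by (simp add: graft_Node)
qed

lemma degree_graft: "even_tree u \<Longrightarrow> degree_pt (graft l r u) = degree_pt u + 2"
  by (erule even_tree_halves) (simp add: graft_Node degree_pt_def)

text \<open>The \<open>r\<close>-index of \<open>t\<close> as a subtree whose root is a right child.\<close>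

definition r_index_right :: "ptree \<Rightarrow> nat" where
  "r_index_right t = (right_deg_sum t + degree_pt t) div 2"

lemma r_index_graft:
  assumes "even_tree l" "even_tree r" "even_tree u"
  shows "r_index (graft l r u) = r_index l + r_index_right r + r_index u"
    and "r_index_right (graft l r u) = r_index l + r_index_right r + r_index_right u + 1"
  using right_deg_sum_graft[OF assms(3)] degree_graft[OF assms(3)] even_tree_even_counts[OF assms(1)]
    even_tree_even_counts[OF assms(2)] even_tree_even_counts[OF assms(3)]
  by (auto simp: r_index_def r_index_right_def elim!: evenE)

lemma even_trees_0: "even_trees 0 = {Node []}"
proof -
  have "t = Node []" if "num_edges t = 0" for t
    using that by (cases t) (simp add: num_edges_Node)
  then show ?thesis
    by (auto simp: even_trees_def num_edges_def)
qed

definition graft_domain :: "nat \<Rightarrow> (ptree \<times> ptree \<times> ptree) set" where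
  "graft_domain n = (\<Union>i\<le>n. even_trees i \<times> (\<Union>j\<le>n - i. even_trees j \<times> even_trees (n - i - j)))"

lemma even_trees_Suc: "even_trees (Suc n) = (\<lambda>(l, r, u). graft l r u) ` graft_domain n"
proof (intro equalityI subsetI)
  fix t assume t: "t \<in> even_trees (Suc n)"
  then obtain l r u where lru: "t = graft l r u" "even_tree l" "even_tree r" "even_tree u"
    by (auto simp: even_trees_def elim: graft_cases)
  obtain i j k where "num_edges l = 2 * i" "num_edges r = 2 * j" "num_edges u = 2 * k"
    using even_tree_even_counts lru(2-4) by (metis evenE)
  moreover have "num_edges l + num_edges r + num_edges u + 2 = 2 * Suc n"
    using t lru(1) by (simp add: even_trees_def num_edges_graft)
  ultimately have "(l, r, u) \<in> graft_domain n"
    using lru unfolding graft_domain_def even_trees_def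
    by (intro UN_I[of i] SigmaI UN_I[of j]) auto
  then show "t \<in> (\<lambda>(l, r, u). graft l r u) ` graft_domain n"
    using lru(1) by force
next
  fix t assume "t \<in> (\<lambda>(l, r, u). graft l r u) ` graft_domain n"
  then show "t \<in> even_trees (Suc n)"
    by (auto simp: graft_domain_def even_trees_def even_tree_graft num_edges_graft)
qed

lemma finite_even_trees: "finite (even_trees n)"
proof (induction n rule: less_induct)
  case (less n)
  then show ?case
    by (cases n) (auto simp: even_trees_0 even_trees_Suc graft_domain_def)
qed

lemma inj_on_graft: "inj_on (\<lambda>(l, r, u). graft l r u) (graft_domain n)"
proof (rule inj_onI)
  fix x y assume "x \<in> graft_domain n" "y \<in> graft_domain n"
    and eq: "(\<lambda>(l, r, u). graft l r u) x = (\<lambda>(l, r, u). graft l r u) y"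
  moreover obtain l r u l' r' u' where "x = (l, r, u)" "y = (l', r', u')"
    by (metis prod_cases3)
  ultimately show "x = y"
    using graft_inj[of u u' l r l' r'] by (auto simp: graft_domain_def even_trees_def)
qed

lemma even_trees_disjoint: "i \<noteq> j \<Longrightarrow> even_trees i \<inter> even_trees j = {}"
  by (auto simp: even_trees_def)

lemma sum_even_trees_Suc:
  fixes F f g h :: "ptree \<Rightarrow> 'a::comm_semiring_0"
  assumes "\<And>l r u. even_tree l \<Longrightarrow> even_tree r \<Longrightarrow> even_tree u
    \<Longrightarrow> F (graft l r u) = f l * (g r * h u)"
  shows "(\<Sum>t\<in>even_trees (Suc n). F t) = (\<Sum>i\<le>n. sum f (even_trees i)
    * (\<Sum>j\<le>n - i. sum g (even_trees j) * sum h (even_trees (n - i - j))))"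
proof -
  have pairs: "(\<Sum>(r, u)\<in>(\<Union>j\<le>m. even_trees j \<times> even_trees (m - j)). g r * h u)
      = (\<Sum>j\<le>m. sum g (even_trees j) * sum h (even_trees (m - j)))" for m
  proof -
    have "(\<Sum>(r, u)\<in>(\<Union>j\<le>m. even_trees j \<times> even_trees (m - j)). g r * h u)
        = (\<Sum>j\<le>m. \<Sum>(r, u)\<in>even_trees j \<times> even_trees (m - j). g r * h u)"
      by (rule sum.UNION_disjoint) (use even_trees_disjoint in \<open>auto simp: finite_even_trees\<close>)
    then show ?thesis
      by (simp add: sum.cartesian_product sum_product)
  qed
  have "(\<Sum>t\<in>even_trees (Suc n). F t) = (\<Sum>(l, r, u)\<in>graft_domain n. F (graft l r u))"
    unfolding even_trees_Suc by (subst sum.reindex[OF inj_on_graft]) (simp add: case_prod_beta)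
  also have "\<dots> = (\<Sum>i\<le>n. \<Sum>(l, r, u)\<in>even_trees i
      \<times> (\<Union>j\<le>n - i. even_trees j \<times> even_trees (n - i - j)). F (graft l r u))"
    unfolding graft_domain_def
    by (rule sum.UNION_disjoint) (use even_trees_disjoint in \<open>auto simp: finite_even_trees\<close>)
  also have "\<dots> = (\<Sum>i\<le>n. sum f (even_trees i)
      * (\<Sum>(r, u)\<in>(\<Union>j\<le>n - i. even_trees j \<times> even_trees (n - i - j)). g r * h u))"
    by (intro sum.cong refl sum_Times_mult) (auto simp: assms even_trees_def)
  finally show ?thesis
    by (simp only: pairs)
qed

definition tree_poly :: "nat \<Rightarrow> int poly" where
  "tree_poly n = (\<Sum>t\<in>even_trees n. monom 1 (r_index t))"

definition tree_poly_right :: "nat \<Rightarrow> int poly" where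
  "tree_poly_right n = (\<Sum>t\<in>even_trees n. monom 1 (r_index_right t))"

lemma tree_poly_0: "tree_poly 0 = 1" and tree_poly_right_0: "tree_poly_right 0 = 1"
  by (simp_all add: tree_poly_def tree_poly_right_def even_trees_0 r_index_def r_index_right_def
      degree_pt_def)

lemma tree_poly_Suc:
  "tree_poly (Suc n) = (\<Sum>i\<le>n. tree_poly i * (\<Sum>j\<le>n - i. tree_poly_right j * tree_poly (n - i - j)))"
  unfolding tree_poly_def tree_poly_right_def
  by (rule sum_even_trees_Suc) (simp add: r_index_graft mult_monom add.assoc)

lemma tree_poly_right_Suc:
  "tree_poly_right (Suc n) = (\<Sum>i\<le>n. tree_poly i
    * (\<Sum>j\<le>n - i. tree_poly_right j * (north_step_weight True * tree_poly_right (n - i - j))))"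
proof -
  have shift: "north_step_weight True * tree_poly_right k
      = (\<Sum>t\<in>even_trees k. monom 1 (r_index_right t + 1))" for k
    by (simp add: tree_poly_right_def north_step_weight_def sum_distrib_left mult_monom)
  have "tree_poly_right (Suc n) = (\<Sum>i\<le>n. tree_poly i * (\<Sum>j\<le>n - i. tree_poly_right j
      * (\<Sum>t\<in>even_trees (n - i - j). monom 1 (r_index_right t + 1))))"
    unfolding tree_poly_def tree_poly_right_def
    by (rule sum_even_trees_Suc) (simp add: r_index_graft mult_monom add.assoc)
  then show ?thesis
    by (simp only: shift)
qed

definition tree_fps :: "int poly fps" where
  "tree_fps = Abs_fps tree_poly"

definition tree_fps_right :: "int poly fps" where
  "tree_fps_right = Abs_fps tree_poly_right"

lemma tree_fps_system:
  defines "A \<equiv> tree_fps" and "B \<equiv> tree_fps_right" and "c \<equiv> fps_const (north_step_weight True)"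
  shows "A = 1 + fps_X * (A * (B * A))" "B = 1 + fps_X * (A * (B * (c * B)))"
proof -
  show "A = 1 + fps_X * (A * (B * A))"
  proof (rule fps_ext)
    fix n
    show "fps_nth A n = fps_nth (1 + fps_X * (A * (B * A))) n"
      unfolding A_def B_def tree_fps_def tree_fps_right_def
      by (cases n) (simp_all add: tree_poly_0 tree_poly_Suc atLeast0AtMost
          fps_mult_nth[of "Abs_fps tree_poly"] fps_mult_nth[of "Abs_fps tree_poly_right"])
  qed
  show "B = 1 + fps_X * (A * (B * (c * B)))"
  proof (rule fps_ext)
    fix n
    show "fps_nth B n = fps_nth (1 + fps_X * (A * (B * (c * B)))) n"
      unfolding A_def B_def c_def tree_fps_def tree_fps_right_def
      by (cases n) (simp_all add: tree_poly_right_0 tree_poly_right_Suc atLeast0AtMost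
          fps_mult_nth[of "Abs_fps tree_poly"] fps_mult_nth[of "Abs_fps tree_poly_right"])
  qed
qed

lemma right_deg_sum_le: "right_deg_sum t + degree_pt t \<le> num_edges t"
proof (induction t)
  case (Node ts)
  have "sum_list (map degree_pt (drop (length ts div 2) ts)) \<le> sum_list (map degree_pt ts)"
    using sum_list_map_take_drop[of degree_pt "length ts div 2" ts] by linarith
  moreover have "sum_list (map (\<lambda>t. right_deg_sum t + degree_pt t) ts) \<le> sum_list (map num_edges ts)"
    using Node.IH by (intro sum_list_mono) auto
  moreover have "degree_pt (Node ts) = length ts"
    by (simp add: degree_pt_def)
  ultimately show ?case
    by (simp add: num_edges_Node sum_list_addf)
qed

lemma r_index_less:
  assumes "t \<in> even_trees n" "n \<ge> 1"
  shows "r_index t < n"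
proof -
  obtain ts where t: "t = Node ts"
    by (cases t)
  with assms have "even (length ts)" "ts \<noteq> []"
    by (auto simp: even_trees_def num_edges_Node)
  then have "2 \<le> degree_pt t"
    using t dvd_imp_le[of 2 "length ts"] by (simp add: degree_pt_def)
  with right_deg_sum_le[of t] assms(1) show ?thesis
    by (auto simp: r_index_def even_trees_def)
qed

lemma R_poly_eq_tree_poly:
  assumes "n \<ge> 1"
  shows "R_poly n = tree_poly n"
proof -
  have "tree_poly n = (\<Sum>k<n. \<Sum>t\<in>{t \<in> even_trees n. r_index t = k}. monom 1 (r_index t))"
    unfolding tree_poly_def
    by (rule sum.group[symmetric]) (use finite_even_trees r_index_less assms in auto)
  also have "\<dots> = (\<Sum>k<n. monom (int (R_count n k)) k)"
  proof (rule sum.cong[OF refl])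
    fix k
    have "{t \<in> even_trees n. r_index t = k} = {t. even_tree t \<and> num_edges t = 2 * n \<and> r_index t = k}"
      by (auto simp: even_trees_def)
    then show "(\<Sum>t\<in>{t \<in> even_trees n. r_index t = k}. monom 1 (r_index t)) = monom (int (R_count n k)) k"
      by (simp add: R_count_def of_nat_monom mult_monom)
  qed
  finally show ?thesis
    by (simp add: R_poly_def)
qed

lemma nonneg_path_iff_visited:
  "nonneg_path (int a - 2 * int b) ss \<longleftrightarrow> (\<forall>(a', b') \<in> set (visited (a, b) ss). 2 * b' \<le> a')"
proof (induction ss arbitrary: a b)
  case (Cons s ss)
  then show ?case
    using Cons.IH[of a "Suc b"] Cons.IH[of "Suc a" b] by (cases s) (auto simp: algebra_simps)
qed (simp; arith)

lemma odd_weight_eq_odd_north: "odd_weight (odd a) ss = odd_north (a, b) ss"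
  by (induction ss arbitrary: a b) auto

lemma L_poly_eq_path_poly: "L_poly (2 * n) n = path_poly 0 False n"
proof -
  have "lattice_paths (2 * n) n = nonneg_paths 0 n"
    using nonneg_path_iff_visited[where a = 0 and b = 0]
    by (auto simp: lattice_paths_def nonneg_paths_def height_change_def)
  then show ?thesis
    using odd_weight_eq_odd_north[where a = 0 and b = 0] by (simp add: L_poly_def path_poly_def)
qed

theorem mainTheorem2:
  fixes n :: nat
  assumes "n \<ge> 1"
  shows "R_poly n = L_poly (2 * n) n"
proof -
  have "tree_fps = path_fps 0 False"
    using fps_system_unique(1)[OF tree_fps_system path_fps_system] .
  then have "tree_poly n = path_poly 0 False n"
    by (metis fps_nth_Abs_fps tree_fps_def path_fps_def)
  then show ?thesis
    using R_poly_eq_tree_poly[OF assms] L_poly_eq_path_poly by simp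
qed

end
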